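(* Let $G(\mathcal{M})=(R,T;E;c)$ and $G(\mathcal{M}')=(R,T;E;c')$ be two robot-task graphs where $c$ and $c'$ are injective on $E$. Let $\textsc{Auction}(\mathcal{M})=(W=(w_k),a)$, $\textsc{Auction}(\mathcal{M}')=(W'=(w'_k),a')$, and let $U=(u_k)$ denote the edges with second-best bids on $\textsc{Auction}(\mathcal{M})$. Suppose there exists some $e=w_K\in W$ such that $c'(f)=c(f)$ for all $f\in E\setminus\{e\}$. Then $\textsc{Auction}(\mathcal{M})=\textsc{Auction}(\mathcal{M}')$ if and only if $c(u_K)>c'(e)>\max_{k\in B_e\setminus\{K\}}c(w_k)$ in the case $B_e\setminus\{K\}\ne\emptyset$, and $c(u_K)>c'(e)\ge0$ otherwise.
   Context: $R$ (robots) and $T$ (tasks) are finite disjoint sets with $R\neq\emptyset$, $|R\sqcup T|\ge3$. The robot-task graph $(R,T;E;c)$ has vertex set $R\sqcup T$, edge set $E$ consisting of all 2-element subsets of $R\sqcup T$, and a non-negative edge cost $c:E\to\mathbb{R}_+$ (with $\mathbb{R}_+=[0,\infty)\cup\{\infty\}$); injective means distinct edges have distinct costs. $\textsc{Auction}$ on $(R,T;E;c)$: set $A=\emptyset$ and $a(r)=0$ for all $r\in R$. For $k=1,\dots,|T|$ (bid rounds): let $w_k=\{s,t\}$ be the edge with $s\in R\cup A$, $t\in T\setminus A$ minimising $c(\{s,t\})$; set $a(t)=k$ and $A\leftarrow A\cup\{t\}$. The output is the list $W=(w_1,\dots,w_{|T|})$ of winning edges and the assignment function $a:R\sqcup T\to\{0,\dots,|T|\}$.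 Two auction outputs are equal if they have the same list and the same assignment function. For an edge $e=\{x,y\}$, $B_e=\{k\in\mathbb{Z}:\min(a(x),a(y))<k\le\max(a(x),a(y))\}$ (computed from the output of $\textsc{Auction}(\mathcal{M})$); it is the set of bid rounds in which $e$ is considered. The edge with the second-best bid in round $k$ is the edge $u_k\ne w_k$ with $k\in B_{u_k}$ such that $c(u_k)\le c(f)$ for all edges $f\ne w_k$ with $k\in B_f$. *)

theory Defs
  imports "HOL-Library.Extended_Nonnegative_Real"
begin

definition edges :: "'a set \<Rightarrow> 'a set \<Rightarrow> 'a set set" where
  "edges R T = {{x, y} | x y. x \<in> R \<union> T \<and> y \<in> R \<union> T \<and> x \<noteq> y}"

definition candidates :: "'a set \<Rightarrow> 'a set \<Rightarrow> 'a set \<Rightarrow> 'a set set" where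
  "candidates R T A = {{s, t} | s t. s \<in> R \<union> A \<and> t \<in> T - A}"

text \<open>State after k bid rounds: (list of winning edges, assignment function, A).\<close>
fun auction_rounds ::
  "'a set \<Rightarrow> 'a set \<Rightarrow> ('a set \<Rightarrow> ennreal) \<Rightarrow> nat \<Rightarrow> 'a set list \<times> ('a \<Rightarrow> nat) \<times> 'a set" where
  "auction_rounds R T c 0 = ([], (\<lambda>_. 0), {})"
| "auction_rounds R T c (Suc k) =
     (case auction_rounds R T c k of (W, a, A) \<Rightarrow>
        (let w = (ARG_MIN c f. f \<in> candidates R T A);
             t = the_elem (w \<inter> (T - A))
         in (W @ [w], a(t := Suc k), A \<union> {t})))"

text \<open>Output of Auction: the list W = (w_1,...,w_|T|) (w_k = W ! (k-1)) and the assignment a.\<close>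
definition auction :: "'a set \<Rightarrow> 'a set \<Rightarrow> ('a set \<Rightarrow> ennreal) \<Rightarrow> 'a set list \<times> ('a \<Rightarrow> nat)" where
  "auction R T c = (case auction_rounds R T c (card T) of (W, a, A) \<Rightarrow> (W, a))"

definition winner :: "'a set \<Rightarrow> 'a set \<Rightarrow> ('a set \<Rightarrow> ennreal) \<Rightarrow> nat \<Rightarrow> 'a set" where
  "winner R T c k = fst (auction R T c) ! (k - 1)"

definition bid_rounds :: "('a \<Rightarrow> nat) \<Rightarrow> 'a set \<Rightarrow> nat set" where
  "bid_rounds a e = {k. \<exists>x y. e = {x, y} \<and> min (a x) (a y) < k \<and> k \<le> max (a x) (a y)}"

definition second_best :: "'a set \<Rightarrow> 'a set \<Rightarrow> ('a set \<Rightarrow> ennreal) \<Rightarrow> nat \<Rightarrow> 'a set" where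
  "second_best R T c k =
     (THE u. u \<in> edges R T \<and> u \<noteq> winner R T c k \<and> k \<in> bid_rounds (snd (auction R T c)) u \<and>
        (\<forall>f \<in> edges R T. f \<noteq> winner R T c k \<and> k \<in> bid_rounds (snd (auction R T c)) f \<longrightarrow> c u \<le> c f))"

end

theory Submission
  imports Defs
begin

text \<open>Round k of the auction awards the c-cheapest edge among its candidates, and these candidates
  are exactly the edges f with k \<in> B_f, where B is computed from the final assignment. Hence
  the two auctions agree iff every old winner w_k is still c'-minimal among the candidates of
  round k. As c' differs from c only at e = w_K, this is automatic in rounds where e is not a
  candidate; in round K it says that c'(e) stays below the second-best bid c(u_K); and in the
  rounds k \<in> B_e - {K} it says c(w_k) < c'(e). Injectivity of c' makes all inequalities strict.\<close>

lemma is_arg_min_arg_min_finite: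
  fixes f :: "'a \<Rightarrow> 'b::linorder"
  assumes "finite S" "S \<noteq> {}"
  shows "is_arg_min f (\<lambda>x. x \<in> S) (ARG_MIN f x. x \<in> S)"
  using arg_min_if_finite[OF assms, of f] by (auto simp: arg_min_on_def is_arg_min_def)

lemma arg_min_eq_iff_minimal:
  fixes f :: "'a \<Rightarrow> 'b::linorder"
  assumes "finite S" "inj_on f S" "a \<in> S"
  shows "(ARG_MIN f x. x \<in> S) = a \<longleftrightarrow> (\<forall>y\<in>S. f a \<le> f y)"
proof
  assume "(ARG_MIN f x. x \<in> S) = a"
  then show "\<forall>y\<in>S. f a \<le> f y"
    using arg_min_least[OF assms(1)] assms(3) by (auto simp: arg_min_on_def)
next
  assume "\<forall>y\<in>S. f a \<le> f y"
  then show "(ARG_MIN f x. x \<in> S) = a"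
    using assms(2,3) by (intro arg_min_inj_eq) auto
qed

lemma The_is_arg_min_eq_arg_min:
  fixes f :: "'a \<Rightarrow> 'b::linorder"
  assumes "finite S" "S \<noteq> {}" "inj_on f S"
  shows "(THE x. is_arg_min f (\<lambda>x. x \<in> S) x) = (ARG_MIN f x. x \<in> S)"
proof (rule the_equality)
  show "is_arg_min f (\<lambda>x. x \<in> S) (ARG_MIN f x. x \<in> S)"
    using assms(1,2) by (rule is_arg_min_arg_min_finite)
next
  fix x assume "is_arg_min f (\<lambda>x. x \<in> S) x"
  then show "x = (ARG_MIN f x. x \<in> S)"
    using assms(3) by (intro arg_min_inj_eq[symmetric]) (auto simp: is_arg_min_linorder)
qed

lemma minimal_after_perturbing_self_iff:
  fixes c c' :: "'a \<Rightarrow> 'b::linorder"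
  assumes "e \<in> C" "inj_on c' C" "\<forall>f \<in> C - {e}. c' f = c f"
    and "u \<in> C - {e}" "\<forall>f \<in> C - {e}. c u \<le> c f"
  shows "(\<forall>f \<in> C. c' e \<le> c' f) \<longleftrightarrow> c' e < c u"
proof
  assume "\<forall>f \<in> C. c' e \<le> c' f"
  moreover have "c' e \<noteq> c' u" using assms(1,2,4) by (auto dest: inj_onD)
  ultimately show "c' e < c u" using assms(3,4) by (auto simp: order_less_le)
next
  assume "c' e < c u"
  show "\<forall>f \<in> C. c' e \<le> c' f"
  proof
    fix f assume "f \<in> C"
    then have "f \<noteq> e \<Longrightarrow> c u \<le> c' f" using assms(3,5) by auto
    then show "c' e \<le> c' f" using \<open>c' e < c u\<close> by (cases "f = e") auto
  qed
qed

lemma minimal_after_perturbing_competitor_iff: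
  fixes c c' :: "'a \<Rightarrow> 'b::linorder"
  assumes "e \<in> C" "inj_on c' C" "\<forall>f \<in> C - {e}. c' f = c f"
    and "w \<in> C - {e}" "\<forall>f \<in> C. c w \<le> c f"
  shows "(\<forall>f \<in> C. c' w \<le> c' f) \<longleftrightarrow> c w < c' e"
proof
  assume "\<forall>f \<in> C. c' w \<le> c' f"
  moreover have "c' w \<noteq> c' e" using assms(1,2,4) by (auto dest: inj_onD)
  ultimately show "c w < c' e" using assms(1,3,4) by (auto simp: order_less_le)
next
  assume "c w < c' e"
  show "\<forall>f \<in> C. c' w \<le> c' f"
  proof
    fix f assume "f \<in> C"
    have "c' w = c w" using assms(3,4) by blast
    then show "c' w \<le> c' f"
      using \<open>c w < c' e\<close> assms(3,5) \<open>f \<in> C\<close> by (cases "f = e") auto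
  qed
qed

lemma bid_rounds_doubleton:
  "bid_rounds a {x, y} = {k. min (a x) (a y) < k \<and> k \<le> max (a x) (a y)}"
  unfolding bid_rounds_def by (auto simp: doubleton_eq_iff min_def max_def)

text \<open>This is where card (R \<union> T) \<ge> 3 enters: every round has a second-best bid.\<close>

lemma candidates_minus_singleton_nonempty:
  assumes "R \<inter> T = {}" "R \<noteq> {}" "card (R \<union> T) \<ge> 3" "A \<subseteq> T" "A \<noteq> T"
  shows "candidates R T A - {w} \<noteq> {}"
proof -
  obtain r t where r: "r \<in> R" and t: "t \<in> T - A"
    using assms(2,4,5) by blast
  have rt: "r \<noteq> t" using r t assms(1) by blast
  have "\<exists>f g. f \<in> candidates R T A \<and> g \<in> candidates R T A \<and> f \<noteq> g"
  proof (cases "T - A = {t}")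
    case False
    then obtain t' where t': "t' \<in> T - A" "t' \<noteq> t" using t by blast
    then have "r \<noteq> t'" using r assms(1) by blast
    then have "{r, t} \<noteq> {r, t'}" using t' rt by (auto simp: doubleton_eq_iff)
    then show ?thesis using r t t' unfolding candidates_def by blast
  next
    case True
    have "\<not> R \<union> A \<subseteq> {r}"
    proof
      assume "R \<union> A \<subseteq> {r}"
      then have "R \<union> T \<subseteq> {r, t}" using True by blast
      then have "card (R \<union> T) \<le> 2"
        by (metis card_2_iff card_mono finite.emptyI finite.insertI rt)
      then show False using assms(3) by simp
    qed
    then obtain s where s: "s \<in> R \<union> A" "s \<noteq> r" by blast
    then have "{r, t} \<noteq> {s, t}" using t rt assms(1,4) by (auto simp: doubleton_eq_iff)
    then show ?thesis using r t s unfolding candidates_def by blast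
  qed
  then show ?thesis by blast
qed

locale robot_task_graph =
  fixes R T :: "'a set"
  assumes finite_R: "finite R" and finite_T: "finite T"
    and disjoint: "R \<inter> T = {}" and R_nonempty: "R \<noteq> {}"
begin

definition winners_after :: "('a set \<Rightarrow> ennreal) \<Rightarrow> nat \<Rightarrow> 'a set list" where
  "winners_after c k = fst (auction_rounds R T c k)"

definition assignment_after :: "('a set \<Rightarrow> ennreal) \<Rightarrow> nat \<Rightarrow> 'a \<Rightarrow> nat" where
  "assignment_after c k = fst (snd (auction_rounds R T c k))"

definition assigned_after :: "('a set \<Rightarrow> ennreal) \<Rightarrow> nat \<Rightarrow> 'a set" where
  "assigned_after c k = snd (snd (auction_rounds R T c k))"

abbreviation round_candidates :: "('a set \<Rightarrow> ennreal) \<Rightarrow> nat \<Rightarrow> 'a set set" where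
  "round_candidates c k \<equiv> candidates R T (assigned_after c k)"

text \<open>Rounds are counted from 0 here: winners c ! k is the paper's w_(k+1), chosen among
  round_candidates c k.\<close>

abbreviation winners :: "('a set \<Rightarrow> ennreal) \<Rightarrow> 'a set list" where
  "winners c \<equiv> winners_after c (card T)"

abbreviation assignment :: "('a set \<Rightarrow> ennreal) \<Rightarrow> 'a \<Rightarrow> nat" where
  "assignment c \<equiv> assignment_after c (card T)"

lemma auction_rounds_eq:
  "auction_rounds R T c k = (winners_after c k, assignment_after c k, assigned_after c k)"
  by (simp add: winners_after_def assignment_after_def assigned_after_def)

lemma auction_eq: "auction R T c = (winners c, assignment c)"
  by (simp add: auction_def auction_rounds_eq)

lemma winner_eq: "winner R T c k = winners c ! (k - 1)"
  by (simp add: winner_def auction_eq)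

lemma finite_candidates: "finite A \<Longrightarrow> finite (candidates R T A)"
proof -
  assume "finite A"
  have "candidates R T A = (\<lambda>(s, t). {s, t}) ` ((R \<union> A) \<times> (T - A))"
    unfolding candidates_def by auto
  then show ?thesis using \<open>finite A\<close> finite_R finite_T by simp
qed

lemma candidates_nonempty:
  assumes "A \<subseteq> T" "card A < card T"
  shows "candidates R T A \<noteq> {}"
proof -
  obtain t where "t \<in> T - A"
    using assms by (metis Diff_eq_empty_iff less_irrefl subset_antisym ex_in_conv)
  moreover obtain r where "r \<in> R" using R_nonempty by blast
  ultimately show ?thesis unfolding candidates_def by blast
qed

lemma auction_round_Suc:
  assumes "assigned_after c k \<subseteq> T" "card (assigned_after c k) = k" "k < card T"
  obtains s t where "(ARG_MIN c f. f \<in> round_candidates c k) = {s, t}"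
    and "s \<in> R \<union> assigned_after c k" and "t \<in> T - assigned_after c k"
    and "winners_after c (Suc k) = winners_after c k @ [ARG_MIN c f. f \<in> round_candidates c k]"
    and "assignment_after c (Suc k) = (assignment_after c k)(t := Suc k)"
    and "assigned_after c (Suc k) = assigned_after c k \<union> {t}"
proof -
  let ?A = "assigned_after c k"
  define w where "w = (ARG_MIN c f. f \<in> round_candidates c k)"
  have "is_arg_min c (\<lambda>f. f \<in> round_candidates c k) w"
    unfolding w_def using assms finite_subset[OF _ finite_T]
    by (intro is_arg_min_arg_min_finite finite_candidates candidates_nonempty) auto
  then obtain s t where w: "w = {s, t}" and s: "s \<in> R \<union> ?A" and t: "t \<in> T - ?A"
    unfolding candidates_def is_arg_min_def by blast
  have "w \<inter> (T - ?A) = {t}" using w s t disjoint by blast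
  then have "auction_rounds R T c (Suc k) =
      (winners_after c k @ [w], (assignment_after c k)(t := Suc k), ?A \<union> {t})"
    by (simp add: auction_rounds_eq w_def Let_def)
  then show thesis
    using that[of s t] w s t unfolding w_def
    by (simp add: winners_after_def assignment_after_def assigned_after_def)
qed

lemma auction_rounds_invariant:
  assumes "k \<le> card T"
  shows "assigned_after c k \<subseteq> T \<and> card (assigned_after c k) = k \<and>
    length (winners_after c k) = k \<and> (\<forall>x. assignment_after c k x \<le> k) \<and>
    assigned_after c k = {x. assignment_after c k x \<noteq> 0}"
  using assms
proof (induction k)
  case 0
  then show ?case by (simp add: winners_after_def assignment_after_def assigned_after_def)
next
  case (Suc k)
  then have IH: "assigned_after c k \<subseteq> T" "card (assigned_after c k) = k"
    "length (winners_after c k) = k" "\<forall>x. assignment_after c k x \<le> k"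
    "assigned_after c k = {x. assignment_after c k x \<noteq> 0}" by auto
  have "finite (assigned_after c k)" using IH(1) finite_T finite_subset by blast
  obtain t where "t \<in> T - assigned_after c k"
    and "winners_after c (Suc k) = winners_after c k @ [ARG_MIN c f. f \<in> round_candidates c k]"
    and "assignment_after c (Suc k) = (assignment_after c k)(t := Suc k)"
    and "assigned_after c (Suc k) = assigned_after c k \<union> {t}"
    using auction_round_Suc[OF IH(1,2)] Suc.prems by (metis Suc_le_lessD)
  with IH \<open>finite (assigned_after c k)\<close> show ?case by (auto simp: le_Suc_eq)
qed

lemma auction_rounds_prefix:
  assumes "k \<le> m" "m \<le> card T"
  shows "winners_after c k = take k (winners_after c m) \<and>
    assignment_after c k = (\<lambda>x. if assignment_after c m x \<le> k then assignment_after c m x else 0)"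
  using assms
proof (induction m rule: dec_induct)
  case base
  then show ?case using auction_rounds_invariant[of k c] by auto
next
  case (step m)
  then have IH: "winners_after c k = take k (winners_after c m)"
    "assignment_after c k = (\<lambda>x. if assignment_after c m x \<le> k then assignment_after c m x else 0)"
    and m: "m < card T" by auto
  note inv = auction_rounds_invariant[of m c]
  obtain t where "t \<in> T - assigned_after c m"
    and "winners_after c (Suc m) = winners_after c m @ [ARG_MIN c f. f \<in> round_candidates c m]"
    and "assignment_after c (Suc m) = (assignment_after c m)(t := Suc m)"
    using auction_round_Suc[of c m] inv m by (metis less_imp_le)
  with IH inv m step.hyps show ?case by auto
qed

lemma assignment_neq_0_iff: "assignment c x \<noteq> 0 \<longleftrightarrow> x \<in> T"
proof -
  have "assigned_after c (card T) = T"
    using auction_rounds_invariant[of "card T" c] card_subset_eq[OF finite_T] by blast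
  then show ?thesis using auction_rounds_invariant[of "card T" c] by auto
qed

lemma assigned_after_eq:
  assumes "k \<le> card T"
  shows "assigned_after c k = {x \<in> T. assignment c x \<le> k}"
  using auction_rounds_invariant[OF assms, of c] auction_rounds_prefix[OF assms order_refl, of c]
    assignment_neq_0_iff[of c] by auto

lemma round_candidates_eq:
  assumes "k < card T"
  shows "round_candidates c k = {f \<in> edges R T. Suc k \<in> bid_rounds (assignment c) f}"
proof -
  have bidder: "x \<in> R \<union> assigned_after c k \<longleftrightarrow> x \<in> R \<union> T \<and> assignment c x \<le> k"
    and task: "x \<in> T - assigned_after c k \<longleftrightarrow> x \<in> R \<union> T \<and> k < assignment c x" for x
    using assigned_after_eq[of k c] assignment_neq_0_iff[of c x] disjoint assms by auto
  show ?thesis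
  proof (intro set_eqI iffI)
    fix f assume "f \<in> round_candidates c k"
    then obtain s t where "f = {s, t}" "s \<in> R \<union> assigned_after c k" "t \<in> T - assigned_after c k"
      unfolding candidates_def by blast
    then have "s \<noteq> t" "s \<in> R \<union> T" "t \<in> R \<union> T"
      "assignment c s \<le> k" "k < assignment c t"
      unfolding bidder task by auto
    then show "f \<in> {f \<in> edges R T. Suc k \<in> bid_rounds (assignment c) f}"
      unfolding edges_def \<open>f = {s, t}\<close> by (auto simp: bid_rounds_doubleton)
  next
    fix f assume "f \<in> {f \<in> edges R T. Suc k \<in> bid_rounds (assignment c) f}"
    then obtain x y where f: "f = {x, y}" "x \<in> R \<union> T" "y \<in> R \<union> T"
      and "min (assignment c x) (assignment c y) \<le> k" "k < max (assignment c x) (assignment c y)"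
      unfolding edges_def by (auto simp: bid_rounds_doubleton)
    then consider "x \<in> R \<union> assigned_after c k" "y \<in> T - assigned_after c k"
      | "y \<in> R \<union> assigned_after c k" "x \<in> T - assigned_after c k"
      unfolding bidder task by linarith
    then show "f \<in> round_candidates c k"
      unfolding candidates_def f by cases (auto simp: insert_commute)
  qed
qed

lemma winners_nth:
  assumes "k < card T"
  shows "winners c ! k = (ARG_MIN c f. f \<in> round_candidates c k)"
proof -
  have "winners_after c (Suc k) = take (Suc k) (winners c)"
    using auction_rounds_prefix[of "Suc k" "card T" c] assms by simp
  moreover have
    "winners_after c (Suc k) = winners_after c k @ [ARG_MIN c f. f \<in> round_candidates c k]"
    using auction_round_Suc[of c k] auction_rounds_invariant[of k c] assms by (metis less_imp_le)
  moreover have "length (winners_after c k) = k"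
    using auction_rounds_invariant[of k c] assms by simp
  ultimately show ?thesis by (metis lessI nth_append_length nth_take)
qed

lemma is_arg_min_winners_nth:
  assumes "k < card T"
  shows "is_arg_min c (\<lambda>f. f \<in> round_candidates c k) (winners c ! k)"
  unfolding winners_nth[OF assms]
  using auction_rounds_invariant[of k c] assms finite_subset[OF _ finite_T]
  by (intro is_arg_min_arg_min_finite finite_candidates candidates_nonempty) auto

lemma winners_nth_mem_bid_rounds:
  assumes "k < card T"
  shows "Suc k \<in> bid_rounds (assignment c) (winners c ! k)"
  using is_arg_min_winners_nth[OF assms, of c] round_candidates_eq[OF assms]
  by (simp add: is_arg_min_def)

lemma bid_rounds_winners_nth_subset:
  assumes "k < card T"
  shows "bid_rounds (assignment c) (winners c ! k) \<subseteq> {1..Suc k}"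
proof -
  obtain s t where w: "winners c ! k = {s, t}" and s: "s \<in> R \<union> assigned_after c k"
    and "assignment_after c (Suc k) = (assignment_after c k)(t := Suc k)"
    using auction_round_Suc[of c k] auction_rounds_invariant[of k c] assms
    by (metis less_imp_le winners_nth)
  then have "assignment c t = Suc k"
    using auction_rounds_prefix[of "Suc k" "card T" c] assms
    by (auto dest: fun_cong[of _ _ t] split: if_splits)
  moreover have "assignment c s \<le> k"
    using s assigned_after_eq[of k c] assignment_neq_0_iff[of c s] disjoint assms by auto
  ultimately show ?thesis
    unfolding w bid_rounds_doubleton by auto
qed

lemma winners_nth_eq_iff:
  assumes "i < card T" "j < card T"
  shows "winners c ! i = winners c ! j \<longleftrightarrow> i = j"
  using winners_nth_mem_bid_rounds[OF assms(1), of c] winners_nth_mem_bid_rounds[OF assms(2), of c]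
    bid_rounds_winners_nth_subset[OF assms(1), of c] bid_rounds_winners_nth_subset[OF assms(2), of c]
  by fastforce

lemma auction_eq_iff_arg_min_eq:
  "auction R T c = auction R T c' \<longleftrightarrow>
    (\<forall>k<card T. (ARG_MIN c' f. f \<in> round_candidates c k) = winners c ! k)"
proof
  assume "auction R T c = auction R T c'"
  then have "winners c' = winners c" "assignment c' = assignment c"
    by (simp_all add: auction_eq)
  then show "\<forall>k<card T. (ARG_MIN c' f. f \<in> round_candidates c k) = winners c ! k"
    using winners_nth[of _ c'] assigned_after_eq[of _ c] assigned_after_eq[of _ c'] by simp
next
  assume arg_min_eq: "\<forall>k<card T. (ARG_MIN c' f. f \<in> round_candidates c k) = winners c ! k"
  have "auction_rounds R T c m = auction_rounds R T c' m" if "m \<le> card T" for m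
    using that
  proof (induction m)
    case (Suc m)
    then have IH: "winners_after c' m = winners_after c m"
      "assignment_after c' m = assignment_after c m" "assigned_after c' m = assigned_after c m"
      by (simp_all add: auction_rounds_eq)
    have "(ARG_MIN c f. f \<in> round_candidates c m) = (ARG_MIN c' f. f \<in> round_candidates c m)"
      using arg_min_eq winners_nth[of m c] Suc.prems by simp
    then show ?case
      by (simp only: auction_rounds.simps auction_rounds_eq prod.case IH)
  qed simp
  then show "auction R T c = auction R T c'"
    by (simp add: auction_def)
qed

lemma auction_eq_iff_winners_minimal:
  assumes "inj_on c' (edges R T)"
  shows "auction R T c = auction R T c' \<longleftrightarrow>
    (\<forall>k<card T. \<forall>f \<in> round_candidates c k. c' (winners c ! k) \<le> c' f)"
proof -
  have "(ARG_MIN c' f. f \<in> round_candidates c k) = winners c ! k \<longleftrightarrow>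
      (\<forall>f \<in> round_candidates c k. c' (winners c ! k) \<le> c' f)" if k: "k < card T" for k
  proof (rule arg_min_eq_iff_minimal)
    show "finite (round_candidates c k)"
      using auction_rounds_invariant[of k c] k finite_subset[OF _ finite_T]
      by (intro finite_candidates) auto
    show "inj_on c' (round_candidates c k)"
      using assms round_candidates_eq[OF k] by (auto intro: inj_on_subset)
    show "winners c ! k \<in> round_candidates c k"
      using is_arg_min_winners_nth[OF k] by (simp add: is_arg_min_def)
  qed
  then show ?thesis
    by (simp add: auction_eq_iff_arg_min_eq)
qed

lemma second_best_is_arg_min:
  assumes "card (R \<union> T) \<ge> 3" "inj_on c (edges R T)" "1 \<le> K" "K \<le> card T"
  defines "S \<equiv> round_candidates c (K - 1) - {winners c ! (K - 1)}"
  shows "is_arg_min c (\<lambda>f. f \<in> S) (second_best R T c K)"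
proof -
  have K: "K - 1 < card T" "Suc (K - 1) = K" using assms(3,4) by auto
  have A: "assigned_after c (K - 1) \<subseteq> T" "card (assigned_after c (K - 1)) = K - 1"
    using auction_rounds_invariant[of "K - 1" c] K by auto
  have S_eq: "S = {f \<in> edges R T. f \<noteq> winners c ! (K - 1) \<and> K \<in> bid_rounds (assignment c) f}"
    unfolding S_def round_candidates_eq[OF K(1)] K(2) by blast
  have "finite S"
    unfolding S_def using A finite_subset[OF _ finite_T] by (intro finite_Diff finite_candidates) auto
  moreover have "S \<noteq> {}"
    unfolding S_def using A K disjoint R_nonempty assms(1)
    by (intro candidates_minus_singleton_nonempty) auto
  moreover have "inj_on c S"
    using assms(2) S_eq by (auto intro: inj_on_subset)
  moreover have "second_best R T c K = (THE u. is_arg_min c (\<lambda>f. f \<in> S) u)"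
    unfolding second_best_def winner_eq auction_eq snd_conv is_arg_min_linorder S_eq
    by (intro arg_cong[where f = The] ext) auto
  ultimately show ?thesis
    using The_is_arg_min_eq_arg_min is_arg_min_arg_min_finite by metis
qed

lemma perturbed_round_winner_minimal_iff:
  assumes inj: "inj_on c' (edges R T)"
    and K: "1 \<le> K" "K \<le> card T"
    and e: "e = winners c ! (K - 1)"
    and u: "is_arg_min c (\<lambda>f. f \<in> round_candidates c (K - 1) - {e}) u"
    and perturbed: "\<forall>f \<in> edges R T - {e}. c' f = c f"
    and k: "k < card T"
  shows "(\<forall>f \<in> round_candidates c k. c' (winners c ! k) \<le> c' f) \<longleftrightarrow>
    (Suc k = K \<longrightarrow> c' e < c u) \<and>
    (Suc k \<in> bid_rounds (assignment c) e - {K} \<longrightarrow> c (winners c ! k) < c' e)"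
proof -
  define C w where "C = round_candidates c k" and "w = winners c ! k"
  have K': "K - 1 < card T" "Suc (K - 1) = K" using K by auto
  have C_edges: "C \<subseteq> edges R T" and w: "w \<in> C" "\<forall>f \<in> C. c w \<le> c f"
    using round_candidates_eq[OF k] is_arg_min_winners_nth[OF k]
    unfolding C_def w_def is_arg_min_linorder by auto
  have e_edge: "e \<in> edges R T" and K_mem: "K \<in> bid_rounds (assignment c) e"
    using round_candidates_eq[OF K'(1)] is_arg_min_winners_nth[OF K'(1)] K'(2)
    unfolding e is_arg_min_def by auto
  have e_mem: "e \<in> C \<longleftrightarrow> Suc k \<in> bid_rounds (assignment c) e"
    using round_candidates_eq[OF k] e_edge unfolding C_def by blast
  have c'_C: "c' f = c f" if "f \<in> C" "f \<noteq> e" for f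
    using perturbed C_edges that by blast
  consider (at_K) "Suc k = K" | (before_K) "Suc k \<noteq> K" "Suc k \<in> bid_rounds (assignment c) e"
    | (unconsidered) "Suc k \<notin> bid_rounds (assignment c) e" by blast
  then show ?thesis
  proof cases
    case at_K
    then have "w = e" "C = round_candidates c (K - 1)"
      unfolding w_def C_def e by auto
    then have "(\<forall>f \<in> C. c' e \<le> c' f) \<longleftrightarrow> c' e < c u"
      using u e_mem at_K K_mem c'_C C_edges inj
      by (intro minimal_after_perturbing_self_iff)
        (auto simp: is_arg_min_linorder intro: inj_on_subset)
    then show ?thesis
      using at_K unfolding C_def[symmetric] w_def[symmetric] \<open>w = e\<close> by simp
  next
    case before_K
    then have "w \<noteq> e" "e \<in> C"
      using winners_nth_eq_iff[OF k K'(1)] K'(2) e_mem unfolding w_def e by auto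
    then have "(\<forall>f \<in> C. c' w \<le> c' f) \<longleftrightarrow> c w < c' e"
      using w c'_C C_edges inj
      by (intro minimal_after_perturbing_competitor_iff) (auto intro: inj_on_subset)
    then show ?thesis
      using before_K unfolding C_def[symmetric] w_def[symmetric] by simp
  next
    case unconsidered
    then have "e \<notin> C" "Suc k \<noteq> K" using e_mem K_mem by auto
    then have "\<forall>f \<in> C. c' w \<le> c' f"
      using w c'_C by (metis (no_types, lifting))
    then show ?thesis
      using unconsidered \<open>Suc k \<noteq> K\<close> unfolding C_def[symmetric] w_def[symmetric] by simp
  qed
qed

lemma perturbed_winners_minimal_iff:
  assumes inj: "inj_on c' (edges R T)"
    and K: "1 \<le> K" "K \<le> card T"
    and e: "e = winners c ! (K - 1)"
    and u: "is_arg_min c (\<lambda>f. f \<in> round_candidates c (K - 1) - {e}) u"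
    and perturbed: "\<forall>f \<in> edges R T - {e}. c' f = c f"
  shows "(\<forall>k<card T. \<forall>f \<in> round_candidates c k. c' (winners c ! k) \<le> c' f) \<longleftrightarrow>
    c' e < c u \<and> (\<forall>j \<in> bid_rounds (assignment c) e - {K}. c (winners c ! (j - 1)) < c' e)"
  (is "?minimal \<longleftrightarrow> ?at_K \<and> ?before_K")
proof -
  have B: "bid_rounds (assignment c) e \<subseteq> {1..K}"
    using bid_rounds_winners_nth_subset[of "K - 1" c] K unfolding e by simp
  have "?minimal \<longleftrightarrow> (\<forall>k<card T. (Suc k = K \<longrightarrow> c' e < c u) \<and>
      (Suc k \<in> bid_rounds (assignment c) e - {K} \<longrightarrow> c (winners c ! k) < c' e))"
    using perturbed_round_winner_minimal_iff[OF inj K e u perturbed] by simp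
  also have "\<dots> \<longleftrightarrow> ?at_K \<and> ?before_K"
  proof
    assume rounds: "\<forall>k<card T. (Suc k = K \<longrightarrow> c' e < c u) \<and>
      (Suc k \<in> bid_rounds (assignment c) e - {K} \<longrightarrow> c (winners c ! k) < c' e)"
    have ?at_K using rounds K by (metis Suc_diff_1 diff_less less_le_trans zero_less_one)
    moreover have ?before_K
    proof
      fix j assume j: "j \<in> bid_rounds (assignment c) e - {K}"
      then have "j - 1 < card T" "Suc (j - 1) = j" using B K by fastforce+
      then show "c (winners c ! (j - 1)) < c' e" using rounds j by metis
    qed
    ultimately show "?at_K \<and> ?before_K" ..
  next
    assume conds: "?at_K \<and> ?before_K"
    then have "c (winners c ! (Suc k - 1)) < c' e"
      if "Suc k \<in> bid_rounds (assignment c) e - {K}" for k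
      using that by blast
    then show "\<forall>k<card T. (Suc k = K \<longrightarrow> c' e < c u) \<and>
      (Suc k \<in> bid_rounds (assignment c) e - {K} \<longrightarrow> c (winners c ! k) < c' e)"
      using conds by simp
  qed
  finally show ?thesis .
qed

end

theorem lemma7:
  fixes R T :: "'a set" and c c' :: "'a set \<Rightarrow> ennreal" and K :: nat and e :: "'a set"
  assumes "finite R" and "finite T" and "R \<inter> T = {}" and "R \<noteq> {}"
    and "card (R \<union> T) \<ge> 3"
    and "inj_on c (edges R T)" and "inj_on c' (edges R T)"
    and "1 \<le> K" and "K \<le> card T"
    and "e = winner R T c K"
    and "\<forall>f \<in> edges R T - {e}. c' f = c f"
  shows "auction R T c = auction R T c' \<longleftrightarrow>
    (if bid_rounds (snd (auction R T c)) e - {K} \<noteq> {}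
     then c (second_best R T c K) > c' e \<and>
          c' e > Max ((\<lambda>k. c (winner R T c k)) ` (bid_rounds (snd (auction R T c)) e - {K}))
     else c (second_best R T c K) > c' e \<and> c' e \<ge> 0)"
proof -
  interpret robot_task_graph R T using assms(1-4) by unfold_locales
  have e: "e = winners c ! (K - 1)" using assms(10) by (simp add: winner_eq)
  have u: "is_arg_min c (\<lambda>f. f \<in> round_candidates c (K - 1) - {e}) (second_best R T c K)"
    using second_best_is_arg_min[OF assms(5,6,8,9)] e by simp
  have "bid_rounds (assignment c) e \<subseteq> {1..K}"
    using bid_rounds_winners_nth_subset[of "K - 1" c] assms(8,9) e by simp
  then have "finite (bid_rounds (assignment c) e - {K})"
    using finite_subset by blast
  moreover have "auction R T c = auction R T c' \<longleftrightarrow> c' e < c (second_best R T c K) \<and>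
      (\<forall>j \<in> bid_rounds (assignment c) e - {K}. c (winners c ! (j - 1)) < c' e)"
    unfolding auction_eq_iff_winners_minimal[OF assms(7)]
    by (rule perturbed_winners_minimal_iff[OF assms(7-9) e u assms(11)])
  ultimately show ?thesis
    by (cases "bid_rounds (assignment c) e - {K} = {}")
      (simp_all add: auction_eq winner_eq Max_less_iff)
qed

end
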